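(* Let $\mathcal{S}:=\{z=(z_1,z_2,z_3,z_{11},z_{12},z_{13},z_{23}): z_{11}=z_1^2,\ z_{ij}=z_iz_j\ (1\le i<j\le3),\ 0\le z_i\le1\ (i=1,2,3)\}$. Then $\mathcal{C}^{\rm SDP+MC+Tri}_3$ is not an extended formulation for $\mathrm{conv}(\mathcal{S})$: the projection of $\mathcal{C}^{\rm SDP+MC+Tri}_3$ onto the coordinates $(x_1,x_2,x_3,Y_{11},Y_{12},Y_{13},Y_{23})$ (identified with $(z_1,z_2,z_3,z_{11},z_{12},z_{13},z_{23})$) is not equal to $\mathrm{conv}(\mathcal{S})$.
   Context: $\mathcal{C}^{\rm SDP}_n$ is the set of $(x,Y)$, $x\in[0,1]^n$, $Y$ symmetric $n\times n$, with $\begin{bmatrix}1&x^\top\\ x&Y\end{bmatrix}\succeq0$ and $Y_{kk}\le x_k$ for all $k$. $\mathcal{C}^{\rm SDP+MC+Tri}_n$ adds, for all $1\le k<l\le n$, $Y_{kl}\ge0$, $Y_{kl}\ge x_k+x_l-1$, $Y_{kl}\le x_k$, $Y_{kl}\le x_l$, and for all $1\le k<l<m\le n$, $Y_{kl}+Y_{km}\le x_k+Y_{lm}$, $Y_{kl}+Y_{lm}\le x_l+Y_{km}$, $Y_{km}+Y_{lm}\le x_m+Y_{kl}$, $x_k+x_l+x_m-Y_{kl}-Y_{km}-Y_{lm}\le1$. *)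

theory Defs
  imports "HOL-Analysis.Analysis"
begin

definition psd :: "nat \<Rightarrow> (nat \<Rightarrow> nat \<Rightarrow> real) \<Rightarrow> bool" where
  "psd m M \<longleftrightarrow> (\<forall>i<m. \<forall>j<m. M i j = M j i) \<and>
     (\<forall>v::nat \<Rightarrow> real. 0 \<le> (\<Sum>i<m. \<Sum>j<m. v i * M i j * v j))"

text \<open>The block matrix [1, x^T; x, Y], indices 0..n, where x and Y use indices 1..n.\<close>
definition lift_mat :: "(nat \<Rightarrow> real) \<Rightarrow> (nat \<Rightarrow> nat \<Rightarrow> real) \<Rightarrow> nat \<Rightarrow> nat \<Rightarrow> real" where
  "lift_mat x Y i j =
     (if i = 0 \<and> j = 0 then 1 else if i = 0 then x j else if j = 0 then x i else Y i j)"

text \<open>C^SDP_n; x is indexed by 1..n, Y by {1..n} x {1..n}; values outside are irrelevant.\<close>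
definition C_SDP :: "nat \<Rightarrow> (nat \<Rightarrow> real) \<Rightarrow> (nat \<Rightarrow> nat \<Rightarrow> real) \<Rightarrow> bool" where
  "C_SDP n x Y \<longleftrightarrow>
     (\<forall>k\<in>{1..n}. 0 \<le> x k \<and> x k \<le> 1) \<and>
     (\<forall>k\<in>{1..n}. \<forall>l\<in>{1..n}. Y k l = Y l k) \<and>
     psd (Suc n) (lift_mat x Y) \<and>
     (\<forall>k\<in>{1..n}. Y k k \<le> x k)"

definition C_SDP_MC_Tri :: "nat \<Rightarrow> (nat \<Rightarrow> real) \<Rightarrow> (nat \<Rightarrow> nat \<Rightarrow> real) \<Rightarrow> bool" where
  "C_SDP_MC_Tri n x Y \<longleftrightarrow> C_SDP n x Y \<and>
     (\<forall>k l. 1 \<le> k \<and> k < l \<and> l \<le> n \<longrightarrow>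
        Y k l \<ge> 0 \<and> Y k l \<ge> x k + x l - 1 \<and> Y k l \<le> x k \<and> Y k l \<le> x l) \<and>
     (\<forall>k l m. 1 \<le> k \<and> k < l \<and> l < m \<and> m \<le> n \<longrightarrow>
        Y k l + Y k m \<le> x k + Y l m \<and>
        Y k l + Y l m \<le> x l + Y k m \<and>
        Y k m + Y l m \<le> x m + Y k l \<and>
        x k + x l + x m - Y k l - Y k m - Y l m \<le> 1)"

end

theory Submission
  imports Defs
begin

text \<open>The linear inequality
  \<open>1 - 10 z\<^sub>1 + 15 z\<^sub>2 + 15 z\<^sub>3 + 25 z\<^sub>1\<^sub>1 - 30 z\<^sub>1\<^sub>2 - 30 z\<^sub>1\<^sub>3 + 14 z\<^sub>2\<^sub>3 \<ge> 0\<close>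
  holds on S: at each vertex of the square in \<open>(z\<^sub>2, z\<^sub>3)\<close> it is a univariate quadratic
  in \<open>z\<^sub>1\<close> that is nonnegative on \<open>[0,1]\<close>, and on the whole cube it is the bilinear
  interpolation of these four quadratics. It is violated by
  \<open>x = (7/10, 1/2, 1/2)\<close>, \<open>Y\<^sub>1\<^sub>1 = 57/100\<close>, \<open>Y\<^sub>1\<^sub>2 = Y\<^sub>1\<^sub>3 = 9/20\<close>, \<open>Y\<^sub>2\<^sub>2 = Y\<^sub>3\<^sub>3 = 1/2\<close>,
  \<open>Y\<^sub>2\<^sub>3 = 1/4\<close>, which satisfies the McCormick and triangle inequalities and whose lifted
  matrix is positive semidefinite, its quadratic form being a sum of four squares.\<close>

definition cut_normal :: "real \<times> real \<times> real \<times> real \<times> real \<times> real \<times> real" where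
  "cut_normal = (-10, 15, 15, 25, -30, -30, 14)"

lemma inner_cut_normal:
  "inner cut_normal (z1, z2, z3, z11, z12, z13, z23)
     = -10*z1 + 15*z2 + 15*z3 + 25*z11 - 30*z12 - 30*z13 + 14*z23"
  by (simp add: cut_normal_def)

lemma cut_polynomial_nonneg_on_cube:
  fixes z1 z2 z3 :: real
  assumes "0 \<le> z1" "z1 \<le> 1" "0 \<le> z2" "z2 \<le> 1" "0 \<le> z3" "z3 \<le> 1"
  shows "0 \<le> 1 - 10*z1 + 15*z2 + 15*z3 + 25*z1^2 - 30*(z1*z2) - 30*(z1*z3) + 14*(z2*z3)"
proof -
  have "1 - 10*z1 + 15*z2 + 15*z3 + 25*z1^2 - 30*(z1*z2) - 30*(z1*z3) + 14*(z2*z3)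
      = ((1-z2)*(1-z3)) * (5*z1-1)^2 + (z2*(1-z3)) * (5*z1-4)^2
        + ((1-z2)*z3) * (5*z1-4)^2 + (z2*z3) * ((1-z1)*(45-25*z1))"
    by (simp add: algebra_simps power2_eq_square)
  moreover have "0 \<le> (1-z2)*(1-z3)" "0 \<le> z2*(1-z3)" "0 \<le> (1-z2)*z3" "0 \<le> z2*z3"
    and "0 \<le> (1-z1)*(45-25*z1)"
    using assms by simp_all
  ultimately show ?thesis
    by (metis add_nonneg_nonneg mult_nonneg_nonneg zero_le_power2)
qed

lemma convex_hull_moment_points_subset_cut:
  "convex hull {(z1, z2, z3, z1^2, z1*z2, z1*z3, z2*z3) | z1 z2 z3 :: real.
      0 \<le> z1 \<and> z1 \<le> 1 \<and> 0 \<le> z2 \<and> z2 \<le> 1 \<and> 0 \<le> z3 \<and> z3 \<le> 1}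
     \<subseteq> {p. inner cut_normal p \<ge> -1}"
proof (rule hull_minimal)
  show "{(z1, z2, z3, z1^2, z1*z2, z1*z3, z2*z3) | z1 z2 z3 :: real.
      0 \<le> z1 \<and> z1 \<le> 1 \<and> 0 \<le> z2 \<and> z2 \<le> 1 \<and> 0 \<le> z3 \<and> z3 \<le> 1}
     \<subseteq> {p. inner cut_normal p \<ge> -1}"
  proof clarify
    fix z1 z2 z3 :: real
    assume "0 \<le> z1" "z1 \<le> 1" "0 \<le> z2" "z2 \<le> 1" "0 \<le> z3" "z3 \<le> 1"
    then have "0 \<le> 1 - 10*z1 + 15*z2 + 15*z3 + 25*z1^2 - 30*(z1*z2) - 30*(z1*z3) + 14*(z2*z3)"
      by (rule cut_polynomial_nonneg_on_cube)
    then show "-1 \<le> inner cut_normal (z1, z2, z3, z1^2, z1*z2, z1*z3, z2*z3)"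
      unfolding inner_cut_normal by linarith
  qed
  show "convex {p. inner cut_normal p \<ge> -1}"
    by (rule convex_halfspace_ge)
qed

lemma ball_atLeastAtMost_1_3: "(\<forall>k\<in>{1..3::nat}. P k) \<longleftrightarrow> P 1 \<and> P 2 \<and> P 3"
  by (auto simp: numeral_eq_Suc le_Suc_eq)

lemma all_pairs_upto_3:
  "(\<forall>k l. 1 \<le> k \<and> k < l \<and> l \<le> (3::nat) \<longrightarrow> P k l) \<longleftrightarrow> P 1 2 \<and> P 1 3 \<and> P 2 3"
proof -
  have "1 \<le> k \<and> k < l \<and> l \<le> (3::nat) \<longleftrightarrow> (k, l) \<in> {(1, 2), (1, 3), (2, 3)}" for k l
    by auto
  then show ?thesis
    by auto
qed

lemma all_triples_upto_3:
  "(\<forall>k l m. 1 \<le> k \<and> k < l \<and> l < m \<and> m \<le> (3::nat) \<longrightarrow> P k l m) \<longleftrightarrow> P 1 2 3"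
proof -
  have "1 \<le> k \<and> k < l \<and> l < m \<and> m \<le> (3::nat) \<longleftrightarrow> k = 1 \<and> l = 2 \<and> m = 3" for k l m
    by auto
  then show ?thesis
    by auto
qed

definition x_sep :: "nat \<Rightarrow> real" where
  "x_sep i = (if i = 1 then 7/10 else 1/2)"

definition Y_sep :: "nat \<Rightarrow> nat \<Rightarrow> real" where
  "Y_sep i j = (if i = 1 \<and> j = 1 then 57/100 else if i = 1 \<or> j = 1 then 9/20
     else if i = j then 1/2 else 1/4)"

lemma psd_lift_mat_sep: "psd 4 (lift_mat x_sep Y_sep)"
  unfolding psd_def
proof (intro conjI allI impI)
  fix i j :: nat
  show "lift_mat x_sep Y_sep i j = lift_mat x_sep Y_sep j i"
    by (auto simp: lift_mat_def Y_sep_def)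
next
  fix v :: "nat \<Rightarrow> real"
  have "(\<Sum>i<4. \<Sum>j<4. v i * lift_mat x_sep Y_sep i j * v j)
      = ((v 0 + 3/10 * v 1)^2 + (v 0 + 7/10 * v 1 + v 2)^2 + (v 0 + 7/10 * v 1 + v 3)^2
         + (v 0 + 11/10 * v 1 + v 2 + v 3)^2) / 4"
    by (simp add: numeral_eq_Suc lift_mat_def x_sep_def Y_sep_def algebra_simps power2_eq_square)
  also have "\<dots> \<ge> 0"
    by simp
  finally show "0 \<le> (\<Sum>i<4. \<Sum>j<4. v i * lift_mat x_sep Y_sep i j * v j)"
    by simp
qed

lemma C_SDP_MC_Tri_sep: "C_SDP_MC_Tri 3 x_sep Y_sep"
  using psd_lift_mat_sep
  unfolding C_SDP_MC_Tri_def C_SDP_def ball_atLeastAtMost_1_3 all_pairs_upto_3 all_triples_upto_3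
  by (simp add: numeral_eq_Suc x_sep_def Y_sep_def)

lemma sep_violates_cut:
  "inner cut_normal (x_sep 1, x_sep 2, x_sep 3, Y_sep 1 1, Y_sep 1 2, Y_sep 1 3, Y_sep 2 3) < -1"
  by (simp add: inner_cut_normal x_sep_def Y_sep_def)

theorem corollary2:
  shows "{(x 1, x 2, x 3, Y 1 1, Y 1 2, Y 1 3, Y 2 3) | x Y. C_SDP_MC_Tri 3 x Y}
     \<noteq> convex hull {(z1, z2, z3, z1^2, z1*z2, z1*z3, z2*z3) | z1 z2 z3 :: real.
            0 \<le> z1 \<and> z1 \<le> 1 \<and> 0 \<le> z2 \<and> z2 \<le> 1 \<and> 0 \<le> z3 \<and> z3 \<le> 1}"
proof
  let ?p = "(x_sep 1, x_sep 2, x_sep 3, Y_sep 1 1, Y_sep 1 2, Y_sep 1 3, Y_sep 2 3)"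
  assume projection_eq_hull: "{(x 1, x 2, x 3, Y 1 1, Y 1 2, Y 1 3, Y 2 3) | x Y. C_SDP_MC_Tri 3 x Y}
     = convex hull {(z1, z2, z3, z1^2, z1*z2, z1*z3, z2*z3) | z1 z2 z3 :: real.
            0 \<le> z1 \<and> z1 \<le> 1 \<and> 0 \<le> z2 \<and> z2 \<le> 1 \<and> 0 \<le> z3 \<and> z3 \<le> 1}"
  have "?p \<in> {(x 1, x 2, x 3, Y 1 1, Y 1 2, Y 1 3, Y 2 3) | x Y. C_SDP_MC_Tri 3 x Y}"
    using C_SDP_MC_Tri_sep by blast
  then have "inner cut_normal ?p \<ge> -1"
    using convex_hull_moment_points_subset_cut unfolding projection_eq_hull by blast
  then show False
    using sep_violates_cut by simp
qed

end
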